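(* Let $h\ge1$ and $m\ge1$ be integers. (a) Let $G$ be a finite Abelian group of order $v$ and $B=\{0,b_1,\dots,b_m\}\subseteq G$ a $B_h$ set (of cardinality $m+1$) that generates $G$. Then $\Lambda=\{\mathbf x\in\mathbb Z^m:\sum_{i=1}^m x_ib_i=0\}$ is a sublattice of $\mathbb Z^m$ with $d_a(\mathbf x,\mathbf y)>h$ for all distinct $\mathbf x,\mathbf y\in\Lambda$, and its density is $\mu(\Lambda)=1/v$. (b) Conversely, if $\Lambda'\subseteq\mathbb Z^m$ is a sublattice with $d_a(\mathbf x,\mathbf y)>h$ for all distinct $\mathbf x,\mathbf y\in\Lambda'$, then the quotient group $G=\mathbb Z^m/\Lambda'$ contains a $B_h$ set of cardinality $m+1$ that generates $G$.
   Context: A sublattice of $\mathbb Z^m$ is a subgroup of $(\mathbb Z^m,+)$. $d_a(\mathbf x,\mathbf y)=\max\{\sum_{i:x_i>y_i}(x_i-y_i),\sum_{i:x_i<y_i}(y_i-x_i)\}$. For an Abelian group $G$ (written additively), a set $B=\{b_0,\dots,b_m\}\subseteq G$ of $m+1$ elements is a $B_h$ set if the sums $b_{i_1}+\dots+b_{i_h}$, $0\le i_1\le\dots\le i_h\le m$, are pairwise different (for different index tuples). For $x_i\in\mathbb Z$, $x_ib_i$ denotes the $|x_i|$-fold sum of $b_i$ if $x_i\ge0$ and of $-b_i$ if $x_i<0$. The density of a lattice $\Lambda$ is $\mu(\Lambda)=\lim_{k\to\infty}|\Lambda\cap\{-k,\dots,k\}^m|/(2k+1)^m$. *)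

theory Defs
  imports "HOL-Analysis.Analysis" "HOL-Algebra.Algebra"
begin

text \<open>Integer vectors of Z^m, indexed by 1..m (zero outside).\<close>
definition zvec :: "nat \<Rightarrow> (nat \<Rightarrow> int) set" where
  "zvec m = {x. \<forall>i. i \<notin> {1..m} \<longrightarrow> x i = 0}"

definition Zm :: "nat \<Rightarrow> (nat \<Rightarrow> int) monoid" where
  "Zm m = \<lparr>carrier = zvec m, mult = (\<lambda>x y i. x i + y i), one = (\<lambda>i. 0)\<rparr>"

definition sublattice :: "nat \<Rightarrow> (nat \<Rightarrow> int) set \<Rightarrow> bool" where
  "sublattice m L \<longleftrightarrow> subgroup L (Zm m)"

definition d_a :: "nat \<Rightarrow> (nat \<Rightarrow> int) \<Rightarrow> (nat \<Rightarrow> int) \<Rightarrow> int" where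
  "d_a m x y = max (\<Sum>i\<in>{1..m}. if x i > y i then x i - y i else 0)
                   (\<Sum>i\<in>{1..m}. if x i < y i then y i - x i else 0)"

definition index_tuples :: "nat \<Rightarrow> nat \<Rightarrow> nat list set" where
  "index_tuples m h = {xs. length xs = h \<and> sorted xs \<and> set xs \<subseteq> {..m}}"

definition tuple_sum :: "('a, 'c) monoid_scheme \<Rightarrow> (nat \<Rightarrow> 'a) \<Rightarrow> nat list \<Rightarrow> 'a" where
  "tuple_sum G b xs = foldr (\<lambda>i acc. b i \<otimes>\<^bsub>G\<^esub> acc) xs \<one>\<^bsub>G\<^esub>"

definition Bh_set :: "('a, 'c) monoid_scheme \<Rightarrow> nat \<Rightarrow> nat \<Rightarrow> (nat \<Rightarrow> 'a) \<Rightarrow> bool" where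
  "Bh_set G h m b \<longleftrightarrow> (\<forall>i\<le>m. b i \<in> carrier G) \<and> inj_on b {..m}
     \<and> inj_on (tuple_sum G b) (index_tuples m h)"

definition kernel_lattice :: "('a, 'c) monoid_scheme \<Rightarrow> nat \<Rightarrow> (nat \<Rightarrow> 'a) \<Rightarrow> (nat \<Rightarrow> int) set" where
  "kernel_lattice G m b =
     {x \<in> zvec m. finprod G (\<lambda>i. b i [^]\<^bsub>G\<^esub> x i) {1..m} = \<one>\<^bsub>G\<^esub>}"

definition cube :: "nat \<Rightarrow> nat \<Rightarrow> (nat \<Rightarrow> int) set" where
  "cube m k = {x \<in> zvec m. \<forall>i\<in>{1..m}. \<bar>x i\<bar> \<le> int k}"

definition has_density :: "nat \<Rightarrow> (nat \<Rightarrow> int) set \<Rightarrow> real \<Rightarrow> bool" where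
  "has_density m L \<mu> \<longleftrightarrow>
     (\<lambda>k. real (card (L \<inter> cube m k)) / (2 * real k + 1) ^ m) \<longlonglongrightarrow> \<mu>"

end

theory Submission
  imports Defs "HOL-Real_Asymp.Real_Asymp"
begin

text \<open>
  (a) The map \<open>x \<mapsto> \<Sum> x\<^sub>i b\<^sub>i\<close> is a homomorphism from \<open>\<int>\<^sup>m\<close> onto \<open>G\<close> with kernel \<open>\<Lambda>\<close>.
  A sum of \<open>h\<close> elements of \<open>B\<close> only depends on the multiplicity vector \<open>p \<ge> 0\<close>, \<open>|p| \<le> h\<close>, of
  \<open>b\<^sub>1, \<dots>, b\<^sub>m\<close> in it (the rest is padded with \<open>b\<^sub>0 = 0\<close>), and two such sums agree iff
  \<open>p - q \<in> \<Lambda>\<close>. As \<open>d\<^sub>a(x, y)\<close> is the larger of the sizes of the positive and negative parts of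
  \<open>x - y\<close>, the \<open>B\<^sub>h\<close> property says precisely that distinct points of \<open>\<Lambda>\<close> are at distance \<open>> h\<close>.
  A subgroup of index \<open>v\<close> has density \<open>1/v\<close>: translating by a bounded set of coset
  representatives compares each of the \<open>v\<close> fibres inside a box with \<open>\<Lambda>\<close> inside a slightly
  larger box.
  (b) In \<open>\<int>\<^sup>m/\<Lambda>'\<close> the cosets of \<open>0, e\<^sub>1, \<dots>, e\<^sub>m\<close> generate, and the same correspondence, read
  backwards, shows that they form a \<open>B\<^sub>h\<close> set.
\<close>

lemma Zm_carrier [simp]: "carrier (Zm m) = zvec m"
  by (simp add: Zm_def)

lemma Zm_mult [simp]: "x \<otimes>\<^bsub>Zm m\<^esub> y = (\<lambda>i. x i + y i)"
  by (simp add: Zm_def)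

lemma Zm_one [simp]: "\<one>\<^bsub>Zm m\<^esub> = (\<lambda>i. 0)"
  by (simp add: Zm_def)

lemma comm_group_Zm: "comm_group (Zm m)"
proof (rule comm_groupI)
  fix x assume "x \<in> carrier (Zm m)"
  then show "\<exists>y\<in>carrier (Zm m). y \<otimes>\<^bsub>Zm m\<^esub> x = \<one>\<^bsub>Zm m\<^esub>"
    by (intro bexI[of _ "\<lambda>i. - x i"]) (auto simp: zvec_def)
qed (auto simp: zvec_def add.assoc add.commute)

interpretation Zm: comm_group "Zm m"
  by (rule comm_group_Zm)

lemma Zm_inv [simp]: "x \<in> zvec m \<Longrightarrow> inv\<^bsub>Zm m\<^esub> x = (\<lambda>i. - x i)"
  by (rule Zm.inv_equality) (auto simp: zvec_def)

text \<open>The index 0 is reserved for \<open>b\<^sub>0 = 0\<close>, so \<open>unit_vec 0\<close> and the 0-entries of \<open>count_vec\<close> vanish.\<close>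

definition unit_vec :: "nat \<Rightarrow> nat \<Rightarrow> int" where
  "unit_vec i = (\<lambda>j. if j = i \<and> j \<noteq> 0 then 1 else 0)"

definition count_vec :: "nat list \<Rightarrow> nat \<Rightarrow> int" where
  "count_vec xs = (\<lambda>j. if j = 0 then 0 else int (count_list xs j))"

lemma unit_vec_0 [simp]: "unit_vec 0 = (\<lambda>_. 0)"
  by (auto simp: unit_vec_def)

lemma unit_vec_zvec [simp]: "i \<le> m \<Longrightarrow> unit_vec i \<in> zvec m"
  by (auto simp: unit_vec_def zvec_def)

lemma count_vec_Nil: "count_vec [] = \<one>\<^bsub>Zm m\<^esub>"
  by (simp add: count_vec_def fun_eq_iff)

lemma count_vec_Cons: "count_vec (a # xs) = unit_vec a \<otimes>\<^bsub>Zm m\<^esub> count_vec xs"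
  by (simp add: count_vec_def unit_vec_def fun_eq_iff)

lemma count_vec_zvec: "set xs \<subseteq> {..m} \<Longrightarrow> count_vec xs \<in> zvec m"
  by (auto simp: count_vec_def zvec_def count_list_0_iff)

lemma zvec_subset_generate_unit_vecs: "zvec m \<subseteq> generate (Zm m) (unit_vec ` {1..m})"
proof
  fix x assume "x \<in> zvec m"
  then show "x \<in> generate (Zm m) (unit_vec ` {1..m})"
  proof (induction "\<Sum>i\<in>{1..m}. nat \<bar>x i\<bar>" arbitrary: x rule: less_induct)
    case less
    show ?case
    proof (cases "\<forall>i\<in>{1..m}. x i = 0")
      case True
      then have "x = \<one>\<^bsub>Zm m\<^esub>"
        using less.prems by (auto simp: zvec_def fun_eq_iff)
      then show ?thesis using generate.one[of "Zm m"] by simp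
    next
      case False
      then obtain i where i: "i \<in> {1..m}" "x i \<noteq> 0" by blast
      define u where "u = (\<lambda>j. sgn (x i) * unit_vec i j)"
      have "u = unit_vec i \<or> u = inv\<^bsub>Zm m\<^esub> unit_vec i"
        using i by (cases "x i > 0") (auto simp: u_def fun_eq_iff)
      then have u_gen: "u \<in> generate (Zm m) (unit_vec ` {1..m})"
        using i by (metis generate.incl generate.inv image_eqI)
      define y where "y = (\<lambda>j. x j - u j)"
      have y_zvec: "y \<in> zvec m"
        using less.prems i by (auto simp: y_def u_def unit_vec_def zvec_def)
      have "(\<Sum>j\<in>{1..m}. nat \<bar>y j\<bar>) < (\<Sum>j\<in>{1..m}. nat \<bar>x j\<bar>)"
        using i by (intro sum_strict_mono_ex1) (auto simp: y_def u_def unit_vec_def sgn_if)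
      then have "y \<in> generate (Zm m) (unit_vec ` {1..m})"
        using less.hyps y_zvec by blast
      moreover have "x = y \<otimes>\<^bsub>Zm m\<^esub> u"
        by (simp add: y_def)
      ultimately show ?thesis
        using u_gen generate.eng by metis
    qed
  qed
qed

lemma generate_unit_vecs: "generate (Zm m) (unit_vec ` {..m}) = zvec m"
proof
  show "generate (Zm m) (unit_vec ` {..m}) \<subseteq> zvec m"
    by (metis Zm.generate_incl Zm_carrier image_subsetI atMost_iff unit_vec_zvec)
  show "zvec m \<subseteq> generate (Zm m) (unit_vec ` {..m})"
  proof -
    have "unit_vec ` {1..m} \<subseteq> unit_vec ` {..m}" by auto
    then show ?thesis
      using zvec_subset_generate_unit_vecs Zm.mono_generate by blast
  qed
qed

lemma tuple_sum_cong: "(\<And>i. i \<in> set xs \<Longrightarrow> b i = c i) \<Longrightarrow> tuple_sum G b xs = tuple_sum G c xs"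
  unfolding tuple_sum_def by (induction xs) auto

lemma tuple_sum_hom_unit_vec:
  assumes "group G" and f: "f \<in> hom (Zm m) G" and "set xs \<subseteq> {..m}"
  shows "tuple_sum G (\<lambda>i. f (unit_vec i)) xs = f (count_vec xs)"
  using assms(3)
proof (induction xs)
  case Nil
  interpret group_hom "Zm m" G f
    using assms(1,2) Zm.is_group by (simp add: group_hom_def group_hom_axioms_def)
  show ?case using hom_one by (simp add: tuple_sum_def count_vec_Nil[of m])
next
  case (Cons a xs)
  then have "tuple_sum G (\<lambda>i. f (unit_vec i)) (a # xs) = f (unit_vec a) \<otimes>\<^bsub>G\<^esub> f (count_vec xs)"
    by (simp add: tuple_sum_def)
  also have "\<dots> = f (unit_vec a \<otimes>\<^bsub>Zm m\<^esub> count_vec xs)"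
    by (rule hom_mult[symmetric, OF f]) (use Cons.prems count_vec_zvec in auto)
  also have "\<dots> = f (count_vec (a # xs))"
    unfolding count_vec_Cons[of a xs m] ..
  finally show ?case .
qed

lemma count_vec_nonneg: "0 \<le> count_vec xs i"
  by (simp add: count_vec_def)

lemma count_list_index_tuple:
  assumes "xs \<in> index_tuples m h"
  shows "count_list xs 0 + (\<Sum>j\<in>{1..m}. count_list xs j) = h"
proof -
  have "{..m} = insert 0 {1..m}" by auto
  then show ?thesis
    using assms sum_count_set[of xs "{..m}"] by (simp add: index_tuples_def)
qed

lemma sum_count_vec_le:
  assumes "xs \<in> index_tuples m h"
  shows "(\<Sum>i\<in>{1..m}. count_vec xs i) \<le> int h"
proof -
  have "(\<Sum>i\<in>{1..m}. count_vec xs i) = int (\<Sum>j\<in>{1..m}. count_list xs j)"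
    by (simp add: count_vec_def)
  then show ?thesis
    using count_list_index_tuple[OF assms] by linarith
qed

text \<open>The multiplicity of 0, which \<open>count_vec\<close> forgets, is recovered from the length.\<close>

lemma count_vec_inj_on_index_tuples: "inj_on count_vec (index_tuples m h)"
proof (rule inj_onI)
  fix xs ys assume xs: "xs \<in> index_tuples m h" and ys: "ys \<in> index_tuples m h"
    and eq: "count_vec xs = count_vec ys"
  have pos: "count_list xs j = count_list ys j" if "j \<noteq> 0" for j
    using fun_cong[OF eq, of j] that by (simp add: count_vec_def)
  then have "(\<Sum>j\<in>{1..m}. count_list xs j) = (\<Sum>j\<in>{1..m}. count_list ys j)"
    by (intro sum.cong) auto
  then have "count_list xs 0 = count_list ys 0"
    using count_list_index_tuple[OF xs] count_list_index_tuple[OF ys] by linarith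
  with pos have "mset xs = mset ys"
    by (metis multiset_eqI count_mset)
  with xs ys show "xs = ys"
    using properties_for_sort[of ys xs] sorted_sort_id[of xs] by (simp add: index_tuples_def)
qed

lemma exists_index_tuple_count_vec:
  assumes p: "p \<in> zvec m" "\<And>i. 0 \<le> p i" and sum_p: "(\<Sum>i\<in>{1..m}. p i) \<le> int h"
  shows "\<exists>xs\<in>index_tuples m h. count_vec xs = p"
proof -
  define s where "s = (\<Sum>i\<in>{1..m}. nat (p i))"
  define M where "M = replicate_mset (h - s) 0 + (\<Sum>i\<in>{1..m}. replicate_mset (nat (p i)) i)"
  define xs where "xs = sorted_list_of_multiset M"
  have "int s = (\<Sum>i\<in>{1..m}. p i)"
    using p(2) by (simp add: s_def)
  with sum_p have s_le: "s \<le> h" by linarith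
  have count_M: "count M j = (if j = 0 then h - s else if j \<le> m then nat (p j) else 0)" for j
    by (simp add: M_def count_sum if_distrib[of "\<lambda>x. count x j"] sum.delta')
  have "mset xs = M"
    by (simp add: xs_def)
  then have count_xs: "count_list xs j = count M j" for j
    by (metis count_mset)
  have set_xs: "set xs \<subseteq> {..m}"
  proof
    fix j assume "j \<in> set xs"
    then have "count M j \<noteq> 0"
      by (simp add: count_list_0_iff flip: count_xs)
    then show "j \<in> {..m}"
      by (auto simp: count_M split: if_splits)
  qed
  have "length xs = count_list xs 0 + (\<Sum>j\<in>{1..m}. count_list xs j)"
    using count_list_index_tuple[of xs m "length xs"] set_xs by (simp add: index_tuples_def xs_def)
  also have "\<dots> = h"
    using s_le by (simp add: count_xs count_M s_def)
  finally have "xs \<in> index_tuples m h"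
    using set_xs by (simp add: index_tuples_def xs_def)
  moreover have "count_vec xs = p"
    using p by (auto simp: fun_eq_iff count_vec_def count_xs count_M zvec_def)
  ultimately show ?thesis by blast
qed

lemma d_a_eq: "d_a m x y = max (\<Sum>i\<in>{1..m}. max (x i - y i) 0) (\<Sum>i\<in>{1..m}. max (y i - x i) 0)"
  unfolding d_a_def by (intro arg_cong2[where f = max] sum.cong) auto

lemma d_a_diff: "d_a m x y = d_a m (\<lambda>i. x i - y i) (\<lambda>_. 0)"
  by (simp add: d_a_eq)

lemma d_a_count_vec_le:
  assumes "xs \<in> index_tuples m h" and "ys \<in> index_tuples m h"
  shows "d_a m (count_vec xs) (count_vec ys) \<le> int h"
proof -
  have "(\<Sum>i\<in>{1..m}. max (count_vec xs i - count_vec ys i) 0) \<le> (\<Sum>i\<in>{1..m}. count_vec xs i)"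
    "(\<Sum>i\<in>{1..m}. max (count_vec ys i - count_vec xs i) 0) \<le> (\<Sum>i\<in>{1..m}. count_vec ys i)"
    by (intro sum_mono; simp add: count_vec_nonneg)+
  then show ?thesis
    using sum_count_vec_le[OF assms(1)] sum_count_vec_le[OF assms(2)] by (simp add: d_a_eq)
qed

lemma inj_on_tuple_sum_imp_inj_on:
  assumes "monoid G" "\<And>i. i \<le> m \<Longrightarrow> b i \<in> carrier G" "b 0 = \<one>\<^bsub>G\<^esub>" "h \<ge> 1"
    and inj: "inj_on (tuple_sum G b) (index_tuples m h)"
  shows "inj_on b {..m}"
proof (rule inj_onI)
  fix i j assume i: "i \<in> {..m}" and j: "j \<in> {..m}" and eq: "b i = b j"
  have tuple_sum_single: "tuple_sum G b (replicate n 0 @ [k]) = b k" if "k \<le> m" for n k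
    using assms(1-3) that by (induction n) (auto simp: tuple_sum_def)
  have tuple_single: "replicate (h - 1) 0 @ [k] \<in> index_tuples m h" if "k \<le> m" for k
    using that assms(4) by (auto simp: index_tuples_def sorted_append)
  have "replicate (h - 1) 0 @ [i] = replicate (h - 1) 0 @ [j]"
    by (rule inj_onD[OF inj]) (use i j eq tuple_sum_single tuple_single in auto)
  then show "i = j" by simp
qed

lemma cube_bij_PiE:
  "bij_betw (\<lambda>x. restrict x {1..m}) (cube m k) (PiE {1..m} (\<lambda>_. {- int k..int k}))"
proof (rule bij_betwI[where g = "\<lambda>f i. if i \<in> {1..m} then f i else 0"])
  show "(\<lambda>x. restrict x {1..m}) \<in> cube m k \<rightarrow> PiE {1..m} (\<lambda>_. {- int k..int k})"
    by (auto simp: cube_def abs_le_iff)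
  show "(\<lambda>f i. if i \<in> {1..m} then f i else 0) \<in> PiE {1..m} (\<lambda>_. {- int k..int k}) \<rightarrow> cube m k"
    by (auto simp: cube_def zvec_def PiE_def Pi_def abs_le_iff)
qed (auto simp: cube_def zvec_def PiE_def extensional_def)

lemma finite_cube: "finite (cube m k)"
  using bij_betw_finite[OF cube_bij_PiE] by (simp add: finite_PiE)

lemma card_cube: "card (cube m k) = (2 * k + 1) ^ m"
  using bij_betw_same_card[OF cube_bij_PiE] by (simp add: card_PiE nat_add_distrib nat_mult_distrib)

lemma cube_add: "x \<in> cube m k \<Longrightarrow> y \<in> cube m R \<Longrightarrow> x \<otimes>\<^bsub>Zm m\<^esub> y \<in> cube m (k + R)"
  by (auto simp: cube_def zvec_def abs_le_iff) (smt (verit) atLeastAtMost_iff)+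

lemma finite_subset_cube:
  assumes "finite Y" "Y \<subseteq> zvec m"
  shows "\<exists>R. Y \<subseteq> cube m R"
proof
  define R where "R = (\<Sum>y\<in>Y. \<Sum>i\<in>{1..m}. nat \<bar>y i\<bar>)"
  have "nat \<bar>y i\<bar> \<le> R" if "y \<in> Y" "i \<in> {1..m}" for y i
  proof -
    have "nat \<bar>y i\<bar> \<le> (\<Sum>i\<in>{1..m}. nat \<bar>y i\<bar>)"
      using that by (intro member_le_sum) auto
    also have "\<dots> \<le> R"
      unfolding R_def using that assms(1) by (intro member_le_sum) auto
    finally show ?thesis .
  qed
  then show "Y \<subseteq> cube m R"
    using assms(2) by (force simp: cube_def)
qed

lemma tendsto_density_squeeze:
  fixes F :: "nat \<Rightarrow> nat"
  assumes "v > 0"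
    and upper: "\<And>k. v * F k \<le> (2 * (k + R) + 1) ^ m"
    and lower: "\<And>k. (2 * k + 1) ^ m \<le> v * F (k + R)"
  shows "(\<lambda>k. real (F k) / (2 * real k + 1) ^ m) \<longlonglongrightarrow> 1 / real v"
proof (rule tendsto_sandwich)
  have ratio: "(\<lambda>k. (2 * real k + c) / (2 * real k + 1)) \<longlonglongrightarrow> 1" for c :: real
    by real_asymp
  show "(\<lambda>k. 1 / real v * ((2 * real k + (1 - 2 * real R)) / (2 * real k + 1)) ^ m) \<longlonglongrightarrow> 1 / real v"
    using tendsto_mult[OF tendsto_const tendsto_power[OF ratio[of "1 - 2 * real R"], of m], of "1 / real v"]
    by simp
  show "(\<lambda>k. 1 / real v * ((2 * real k + (2 * real R + 1)) / (2 * real k + 1)) ^ m) \<longlonglongrightarrow> 1 / real v"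
    using tendsto_mult[OF tendsto_const tendsto_power[OF ratio[of "2 * real R + 1"], of m], of "1 / real v"]
    by simp
  show "\<forall>\<^sub>F k in sequentially. real (F k) / (2 * real k + 1) ^ m
          \<le> 1 / real v * ((2 * real k + (2 * real R + 1)) / (2 * real k + 1)) ^ m"
  proof (intro always_eventually allI)
    fix k
    have "real v * real (F k) \<le> real ((2 * (k + R) + 1) ^ m)"
      using upper[of k] by (metis of_nat_le_iff of_nat_mult)
    also have "\<dots> = (2 * real k + (2 * real R + 1)) ^ m"
      by (simp add: algebra_simps)
    finally show "real (F k) / (2 * real k + 1) ^ m
          \<le> 1 / real v * ((2 * real k + (2 * real R + 1)) / (2 * real k + 1)) ^ m"
      using \<open>v > 0\<close> by (simp add: power_divide field_simps)
  qed
  show "\<forall>\<^sub>F k in sequentially. 1 / real v * ((2 * real k + (1 - 2 * real R)) / (2 * real k + 1)) ^ m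
          \<le> real (F k) / (2 * real k + 1) ^ m"
    unfolding eventually_sequentially
  proof (intro exI allI impI)
    fix k assume "R \<le> k"
    then have "(2 * real k + (1 - 2 * real R)) ^ m = real ((2 * (k - R) + 1) ^ m)"
      by (simp add: of_nat_diff algebra_simps)
    also have "\<dots> \<le> real v * real (F k)"
      using lower[of "k - R"] \<open>R \<le> k\<close> by (metis le_add_diff_inverse2 of_nat_le_iff of_nat_mult)
    finally show "1 / real v * ((2 * real k + (1 - 2 * real R)) / (2 * real k + 1)) ^ m
          \<le> real (F k) / (2 * real k + 1) ^ m"
      using \<open>v > 0\<close> by (simp add: power_divide field_simps)
  qed
qed

context group
begin

lemma card_fibre_le_shift:
  assumes f: "f \<in> hom (Zm m) G" and y: "y \<in> cube m R"
  shows "card {x \<in> cube m k. f x = g} \<le> card {x \<in> cube m (k + R). f x = g \<otimes> f y}"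
proof (rule card_inj_on_le[where f = "\<lambda>x. x \<otimes>\<^bsub>Zm m\<^esub> y"])
  show "inj_on (\<lambda>x. x \<otimes>\<^bsub>Zm m\<^esub> y) {x \<in> cube m k. f x = g}"
  proof (rule inj_onI)
    fix x z assume "x \<otimes>\<^bsub>Zm m\<^esub> y = z \<otimes>\<^bsub>Zm m\<^esub> y"
    then have "x i = z i" for i
      by (metis Zm_mult add_right_cancel)
    then show "x = z" ..
  qed
  show "(\<lambda>x. x \<otimes>\<^bsub>Zm m\<^esub> y) ` {x \<in> cube m k. f x = g} \<subseteq> {x \<in> cube m (k + R). f x = g \<otimes> f y}"
    using y cube_add[of _ m k y R] hom_mult[OF f] by (auto simp del: Zm_mult simp: cube_def)
  show "finite {x \<in> cube m (k + R). f x = g \<otimes> f y}"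
    by (simp add: finite_cube)
qed

lemma card_cube_eq_sum_fibres:
  assumes f: "f \<in> hom (Zm m) G" and fin: "finite (carrier G)"
  shows "card (cube m k) = (\<Sum>g\<in>carrier G. card {x \<in> cube m k. f x = g})"
proof -
  have "cube m k = (\<Union>g\<in>carrier G. {x \<in> cube m k. f x = g})"
    using hom_in_carrier[OF f] by (auto simp: cube_def)
  also have "card \<dots> = (\<Sum>g\<in>carrier G. card {x \<in> cube m k. f x = g})"
    using fin finite_cube by (intro card_UN_disjoint) auto
  finally show ?thesis .
qed


lemma has_density_kernel:
  assumes f: "f \<in> hom (Zm m) G" and surj: "f ` zvec m = carrier G" and fin: "finite (carrier G)"
  shows "has_density m (kernel (Zm m) G f) (1 / real (order G))"
proof -
  obtain Y where Y: "Y \<subseteq> zvec m" "finite Y" "f ` Y = carrier G"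
    using finite_subset_image[OF fin equalityD2[OF surj]] by metis
  obtain R where R: "Y \<subseteq> cube m R"
    using finite_subset_cube[OF Y(2,1)] by (elim exE)
  define F where "F k = card {x \<in> cube m k. f x = \<one>}" for k
  have "order G > 0"
    using fin by (simp add: order_gt_0_iff_finite)
  moreover have "order G * F k \<le> (2 * (k + R) + 1) ^ m" for k
  proof -
    have "F k \<le> card {x \<in> cube m (k + R). f x = g}" if "g \<in> carrier G" for g
    proof -
      have "g \<in> f ` Y"
        using Y(3) that by simp
      then obtain y where "g = f y" "y \<in> Y"
        by (rule imageE)
      then show ?thesis
        using card_fibre_le_shift[OF f, of y R k \<one>] R that by (auto simp: F_def)
    qed
    then have "(\<Sum>g\<in>carrier G. F k) \<le> (\<Sum>g\<in>carrier G. card {x \<in> cube m (k + R). f x = g})"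
      by (intro sum_mono)
    then show ?thesis
      using card_cube_eq_sum_fibres[OF f fin, of "k + R"] card_cube[of m "k + R"]
      by (simp add: order_def)
  qed
  moreover have "(2 * k + 1) ^ m \<le> order G * F (k + R)" for k
  proof -
    have "card {x \<in> cube m k. f x = g} \<le> F (k + R)" if "g \<in> carrier G" for g
    proof -
      have "inv g \<in> f ` Y"
        using Y(3) that by simp
      then obtain y where "inv g = f y" "y \<in> Y"
        by (rule imageE)
      then show ?thesis
        using card_fibre_le_shift[OF f, of y R k g] R that by (auto simp: F_def simp flip: \<open>inv g = f y\<close>)
    qed
    then have "(\<Sum>g\<in>carrier G. card {x \<in> cube m k. f x = g}) \<le> (\<Sum>g\<in>carrier G. F (k + R))"
      by (intro sum_mono)
    then show ?thesis
      using card_cube_eq_sum_fibres[OF f fin, of k] card_cube[of m k]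
      by (simp add: order_def)
  qed
  ultimately have "(\<lambda>k. real (F k) / (2 * real k + 1) ^ m) \<longlonglongrightarrow> 1 / real (order G)"
    by (rule tendsto_density_squeeze)
  moreover have "kernel (Zm m) G f \<inter> cube m k = {x \<in> cube m k. f x = \<one>}" for k
    by (auto simp: kernel_def cube_def)
  ultimately show ?thesis
    by (simp add: has_density_def F_def)
qed

end

definition lin_comb :: "('a, 'c) monoid_scheme \<Rightarrow> nat \<Rightarrow> (nat \<Rightarrow> 'a) \<Rightarrow> (nat \<Rightarrow> int) \<Rightarrow> 'a" where
  "lin_comb G m b x = finprod G (\<lambda>i. b i [^]\<^bsub>G\<^esub> x i) {1..m}"

lemma kernel_lattice_eq_kernel: "kernel_lattice G m b = kernel (Zm m) G (lin_comb G m b)"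
  by (simp add: kernel_lattice_def kernel_def lin_comb_def)

context comm_group
begin

lemma lin_comb_hom:
  assumes "\<And>i. i \<in> {1..m} \<Longrightarrow> b i \<in> carrier G"
  shows "lin_comb G m b \<in> hom (Zm m) G"
proof (rule homI)
  show "lin_comb G m b x \<in> carrier G" for x
    using assms by (simp add: lin_comb_def finprod_closed)
  fix x y
  have "lin_comb G m b (\<lambda>i. x i + y i) = finprod G (\<lambda>i. b i [^] x i \<otimes> b i [^] y i) {1..m}"
    unfolding lin_comb_def using assms by (intro finprod_cong') (auto simp: int_pow_mult)
  also have "\<dots> = lin_comb G m b x \<otimes> lin_comb G m b y"
    unfolding lin_comb_def using assms by (intro finprod_multf) auto
  finally show "lin_comb G m b (x \<otimes>\<^bsub>Zm m\<^esub> y) = lin_comb G m b x \<otimes> lin_comb G m b y"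
    by simp
qed

lemma lin_comb_unit_vec:
  assumes "\<And>i. i \<in> {1..m} \<Longrightarrow> b i \<in> carrier G"
  shows "lin_comb G m b (unit_vec i) = (if i \<in> {1..m} then b i else \<one>)"
proof -
  have "lin_comb G m b (unit_vec i) = finprod G (\<lambda>j. if j = i then b j else \<one>) {1..m}"
    unfolding lin_comb_def unit_vec_def using assms by (intro finprod_cong') auto
  then show ?thesis
    using assms by (auto simp: finprod_singleton_swap intro: finprod_one_eqI)
qed

context
  fixes m :: nat and b :: "nat \<Rightarrow> 'a"
  assumes b_carrier: "\<And>i. i \<le> m \<Longrightarrow> b i \<in> carrier G" and b_zero: "b 0 = \<one>"
begin

lemma group_hom_lin_comb: "group_hom (Zm m) G (lin_comb G m b)"
  using lin_comb_hom[of m b] b_carrier Zm.is_group is_group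
  by (simp add: group_hom_def group_hom_axioms_def)

lemma lin_comb_unit_vec_eq: "i \<le> m \<Longrightarrow> lin_comb G m b (unit_vec i) = b i"
  using lin_comb_unit_vec[of m b i] b_carrier b_zero by (cases "i = 0") auto

lemma tuple_sum_eq_lin_comb:
  assumes "set xs \<subseteq> {..m}"
  shows "tuple_sum G b xs = lin_comb G m b (count_vec xs)"
proof -
  have "tuple_sum G b xs = tuple_sum G (\<lambda>i. lin_comb G m b (unit_vec i)) xs"
    using assms by (intro tuple_sum_cong) (auto simp: lin_comb_unit_vec_eq)
  also have "\<dots> = lin_comb G m b (count_vec xs)"
    using tuple_sum_hom_unit_vec[OF is_group _ assms] lin_comb_hom[of m b] b_carrier by simp
  finally show ?thesis .
qed

lemma generate_eq_image_lin_comb: "generate G (b ` {..m}) = lin_comb G m b ` zvec m"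
proof -
  have "b ` {..m} = lin_comb G m b ` unit_vec ` {..m}"
    by (force simp: lin_comb_unit_vec_eq)
  moreover have "unit_vec ` {..m} \<subseteq> carrier (Zm m)"
    by auto
  ultimately show ?thesis
    using group_hom.generate_img[OF group_hom_lin_comb] generate_unit_vecs by metis
qed

text \<open>If two kernel vectors were close, the positive and negative parts of their difference would
  be the multiplicity vectors of two distinct \<open>h\<close>-tuples with the same sum.\<close>

lemma Bh_imp_kernel_separated:
  assumes inj: "inj_on (tuple_sum G b) (index_tuples m h)"
    and x: "x \<in> kernel_lattice G m b" and y: "y \<in> kernel_lattice G m b" and "x \<noteq> y"
  shows "d_a m x y > int h"
proof (rule ccontr)
  assume "\<not> d_a m x y > int h"
  then have close: "d_a m x y \<le> int h" by simp
  interpret group_hom "Zm m" G "lin_comb G m b"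
    by (rule group_hom_lin_comb)
  define p where "p i = max (x i - y i) 0" for i
  define q where "q i = max (y i - x i) 0" for i
  have x_zvec: "x \<in> zvec m" and y_zvec: "y \<in> zvec m"
    and lc_x: "lin_comb G m b x = \<one>" and lc_y: "lin_comb G m b y = \<one>"
    using x y by (auto simp: kernel_lattice_eq_kernel kernel_def)
  have pq_zvec: "p \<in> zvec m" "q \<in> zvec m"
    using x_zvec y_zvec by (auto simp: p_def q_def zvec_def)
  obtain xs where xs: "xs \<in> index_tuples m h" "count_vec xs = p"
    using exists_index_tuple_count_vec[of p m h] pq_zvec close by (auto simp: p_def d_a_eq)
  obtain ys where ys: "ys \<in> index_tuples m h" "count_vec ys = q"
    using exists_index_tuple_count_vec[of q m h] pq_zvec close by (auto simp: q_def d_a_eq)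
  have "p \<otimes>\<^bsub>Zm m\<^esub> y = q \<otimes>\<^bsub>Zm m\<^esub> x"
    by (auto simp: p_def q_def fun_eq_iff)
  then have "lin_comb G m b p = lin_comb G m b q"
    using pq_zvec x_zvec y_zvec lc_x lc_y by (metis hom_mult hom_closed Zm_carrier r_one)
  then have "tuple_sum G b xs = tuple_sum G b ys"
    using xs ys by (simp add: tuple_sum_eq_lin_comb index_tuples_def)
  then have "p = q"
    using inj xs ys by (metis inj_onD)
  then have "x = y"
    using x_zvec y_zvec by (auto simp: p_def q_def fun_eq_iff zvec_def max_def split: if_splits)
  with \<open>x \<noteq> y\<close> show False ..
qed

end

end

context
  fixes L :: "(nat \<Rightarrow> int) set" and m h :: nat
  assumes L: "subgroup L (Zm m)"
    and separated: "\<And>x y. x \<in> L \<Longrightarrow> y \<in> L \<Longrightarrow> x \<noteq> y \<Longrightarrow> d_a m x y > int h"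
begin

interpretation normal L "Zm m"
  using L by (rule Zm.subgroup_imp_normal)


lemma inj_on_coset_count_vec: "inj_on (\<lambda>xs. L #>\<^bsub>Zm m\<^esub> count_vec xs) (index_tuples m h)"
proof (rule inj_onI)
  fix xs ys assume xs: "xs \<in> index_tuples m h" and ys: "ys \<in> index_tuples m h"
    and eq: "L #>\<^bsub>Zm m\<^esub> count_vec xs = L #>\<^bsub>Zm m\<^esub> count_vec ys"
  have cv_zvec: "count_vec xs \<in> zvec m" "count_vec ys \<in> zvec m"
    using xs ys count_vec_zvec by (auto simp: index_tuples_def)
  have "count_vec xs \<in> L #>\<^bsub>Zm m\<^esub> count_vec xs"
    using Zm.rcos_self[OF _ L] cv_zvec by simp
  then have "count_vec xs \<in> L #>\<^bsub>Zm m\<^esub> count_vec ys"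
    by (simp only: eq)
  then have diff_L: "(\<lambda>i. count_vec xs i - count_vec ys i) \<in> L"
    using rcos_module_imp[OF Zm.is_group] cv_zvec by simp
  have zero_L: "(\<lambda>i. 0) \<in> L"
    using one_closed by simp
  have "d_a m (\<lambda>i. count_vec xs i - count_vec ys i) (\<lambda>i. 0) \<le> int h"
    using d_a_count_vec_le[OF xs ys] by (simp flip: d_a_diff)
  then have "(\<lambda>i. count_vec xs i - count_vec ys i) = (\<lambda>i. 0)"
    using separated[OF diff_L zero_L] by linarith
  then have "count_vec xs = count_vec ys"
    by (simp add: fun_eq_iff)
  then show "xs = ys"
    using inj_onD[OF count_vec_inj_on_index_tuples] xs ys by blast
qed

lemma tuple_sum_coset_unit_vec:
  "set xs \<subseteq> {..m} \<Longrightarrow>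
    tuple_sum (Zm m Mod L) (\<lambda>i. L #>\<^bsub>Zm m\<^esub> unit_vec i) xs = L #>\<^bsub>Zm m\<^esub> count_vec xs"
  using tuple_sum_hom_unit_vec[OF factorgroup_is_group r_coset_hom_Mod] .

lemma Bh_set_coset_unit_vecs:
  assumes "h \<ge> 1"
  shows "Bh_set (Zm m Mod L) h m (\<lambda>i. L #>\<^bsub>Zm m\<^esub> unit_vec i)"
proof -
  interpret Q: group "Zm m Mod L"
    by (rule factorgroup_is_group)
  have carrier: "L #>\<^bsub>Zm m\<^esub> unit_vec i \<in> carrier (Zm m Mod L)" if "i \<le> m" for i
    using that by (auto simp: carrier_FactGroup)
  have "inj_on (tuple_sum (Zm m Mod L) (\<lambda>i. L #>\<^bsub>Zm m\<^esub> unit_vec i)) (index_tuples m h)"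
    using inj_on_coset_count_vec
    by (rule inj_on_cong[THEN iffD2, rotated]) (simp add: tuple_sum_coset_unit_vec index_tuples_def)
  moreover have "L #>\<^bsub>Zm m\<^esub> unit_vec 0 = \<one>\<^bsub>Zm m Mod L\<^esub>"
    using Zm.coset_mult_one[of L] subset by simp
  ultimately show ?thesis
    using inj_on_tuple_sum_imp_inj_on[OF Q.monoid_axioms carrier _ assms] carrier
    by (simp add: Bh_set_def)
qed

lemma generate_coset_unit_vecs:
  "generate (Zm m Mod L) ((\<lambda>i. L #>\<^bsub>Zm m\<^esub> unit_vec i) ` {..m}) = carrier (Zm m Mod L)"
proof -
  interpret group_hom "Zm m" "Zm m Mod L" "\<lambda>x. L #>\<^bsub>Zm m\<^esub> x"
    using Zm.is_group factorgroup_is_group r_coset_hom_Mod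
    by (simp add: group_hom_def group_hom_axioms_def)
  have "(\<lambda>i. L #>\<^bsub>Zm m\<^esub> unit_vec i) ` {..m} = (\<lambda>x. L #>\<^bsub>Zm m\<^esub> x) ` unit_vec ` {..m}"
    by (simp add: image_image)
  also have "generate (Zm m Mod L) \<dots> = (\<lambda>x. L #>\<^bsub>Zm m\<^esub> x) ` generate (Zm m) (unit_vec ` {..m})"
    by (rule generate_img) auto
  also have "\<dots> = carrier (Zm m Mod L)"
    by (simp add: generate_unit_vecs carrier_FactGroup)
  finally show ?thesis .
qed

end

theorem mainTheorem8:
  fixes h m :: nat
  assumes "h \<ge> 1" and "m \<ge> 1"
  shows "(\<forall>(G :: 'a monoid) (b :: nat \<Rightarrow> 'a).
            comm_group G \<and> finite (carrier G) \<and> b 0 = \<one>\<^bsub>G\<^esub> \<and> Bh_set G h m b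
            \<and> generate G (b ` {..m}) = carrier G \<longrightarrow>
              sublattice m (kernel_lattice G m b)
            \<and> (\<forall>x\<in>kernel_lattice G m b. \<forall>y\<in>kernel_lattice G m b. x \<noteq> y \<longrightarrow> d_a m x y > int h)
            \<and> has_density m (kernel_lattice G m b) (1 / real (order G)))
       \<and> (\<forall>L. sublattice m L \<and> (\<forall>x\<in>L. \<forall>y\<in>L. x \<noteq> y \<longrightarrow> d_a m x y > int h) \<longrightarrow>
            (\<exists>b. Bh_set (Zm m Mod L) h m b
                 \<and> generate (Zm m Mod L) (b ` {..m}) = carrier (Zm m Mod L)))"
proof (intro conjI allI impI; elim conjE)
  fix G :: "'a monoid" and b :: "nat \<Rightarrow> 'a"
  assume "comm_group G" and fin: "finite (carrier G)" and b_zero: "b 0 = \<one>\<^bsub>G\<^esub>"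
    and Bh: "Bh_set G h m b" and gen: "generate G (b ` {..m}) = carrier G"
  interpret G: comm_group G by fact
  have b_carrier: "\<And>i. i \<le> m \<Longrightarrow> b i \<in> carrier G"
    using Bh by (simp add: Bh_set_def)
  note hom = G.group_hom_lin_comb[of m b, OF b_carrier b_zero]
  show "sublattice m (kernel_lattice G m b)"
    unfolding sublattice_def kernel_lattice_eq_kernel by (rule group_hom.subgroup_kernel[OF hom])
  show "\<forall>x\<in>kernel_lattice G m b. \<forall>y\<in>kernel_lattice G m b. x \<noteq> y \<longrightarrow> d_a m x y > int h"
    using G.Bh_imp_kernel_separated[of m b, OF b_carrier b_zero] Bh by (simp add: Bh_set_def)
  show "has_density m (kernel_lattice G m b) (1 / real (order G))"
    unfolding kernel_lattice_eq_kernel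
    using G.has_density_kernel[OF group_hom.homh[OF hom] _ fin] gen
      G.generate_eq_image_lin_comb[of m b, OF b_carrier b_zero]
    by simp
next
  fix L assume "sublattice m L" and "\<forall>x\<in>L. \<forall>y\<in>L. x \<noteq> y \<longrightarrow> d_a m x y > int h"
  then show "\<exists>b. Bh_set (Zm m Mod L) h m b \<and> generate (Zm m Mod L) (b ` {..m}) = carrier (Zm m Mod L)"
    using Bh_set_coset_unit_vecs[of L m h] generate_coset_unit_vecs[of L m h] assms(1) by (auto simp: sublattice_def)
qed

end
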